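(* Consider the Probabilistic Serial mechanism with $n$ agents and $m \le n$ items in the following dichotomous setting for agent 1. Agent 1 has a true strict linear order $\succ_1$ over the items; let $\overline{O}$ be the set of its $k$ most preferred items under $\succ_1$ (for some $1 \le k \le m$), and let agent 1's utility from an allocation be the total amount it receives of items in $\overline{O}$. Fix arbitrary reported strict linear orders of agents $2,\dots,n$. Let $u_1$ be agent 1's utility when it reports $\succ_1$, and let $T$ be the time at which the last item of $\overline{O}$ is exhausted in this truthful run. If $\tfrac23 \le T \le 1$, then for every strict linear order $\succ'_1$ reported by agent 1, its resulting utility $u'_1$ satisfies $u'_1 \le \tfrac32 u_1$.
   Context: Probabilistic Serial: there are $n$ agents and $m$ divisible items of unit supply; each agent reports a strict linear order over all items. Starting at time $0$, every agent consumes at rate $1$ per unit time its most preferred item (according to its report) among those with positive remaining supply; when an item is exhausted, agents consuming it move to their most preferred item still available; this continues until all items are exhausted. Each agent's allocation is the amount of each item it consumed. (In the truthful run agent 1 eats only items of $\overline{O}$ until time $T$, so $u_1 = T$.) *)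

theory Defs
  imports Complex_Main
begin

text \<open>Agents are 0..<n (agent 0 is the paper's agent 1); items are 0..<m.
  A strict linear order over the items is a list enumerating them, most preferred first.\<close>

definition is_order :: "nat \<Rightarrow> nat list \<Rightarrow> bool" where
  "is_order m xs \<longleftrightarrow> distinct xs \<and> set xs = {0..<m}"

text \<open>State of the eating process: (time, remaining supply, allocation so far).\<close>
type_synonym ps_state = "real \<times> (nat \<Rightarrow> real) \<times> (nat \<Rightarrow> nat \<Rightarrow> real)"

definition avail :: "nat \<Rightarrow> (nat \<Rightarrow> real) \<Rightarrow> nat set" where
  "avail m s = {j. j < m \<and> 0 < s j}"

definition top_item :: "nat list \<Rightarrow> nat set \<Rightarrow> nat" where
  "top_item xs A = hd (filter (\<lambda>j. j \<in> A) xs)"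

definition eaters :: "nat \<Rightarrow> (nat \<Rightarrow> nat list) \<Rightarrow> nat set \<Rightarrow> nat \<Rightarrow> nat" where
  "eaters n P A j = card {i. i < n \<and> top_item (P i) A = j}"

text \<open>One phase: every agent eats its top available item at rate 1 until the
  first moment some item is exhausted.\<close>
definition ps_step :: "nat \<Rightarrow> nat \<Rightarrow> (nat \<Rightarrow> nat list) \<Rightarrow> ps_state \<Rightarrow> ps_state" where
  "ps_step n m P st = (case st of (t, s, p) \<Rightarrow>
     (let A = avail m s in
      if A = {} then (t, s, p) else
      (let c = eaters n P A;
           \<delta> = Min ((\<lambda>j. s j / real (c j)) ` {j \<in> A. 0 < c j})
       in (t + \<delta>,
           \<lambda>j. if j \<in> A then s j - real (c j) * \<delta> else s j,
           \<lambda>i j. if i < n \<and> j = top_item (P i) A then p i j + \<delta> else p i j))))"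

definition ps_init :: "nat \<Rightarrow> ps_state" where
  "ps_init m = (0, \<lambda>j. if j < m then 1 else 0, \<lambda>i j. 0)"

definition ps_run :: "nat \<Rightarrow> nat \<Rightarrow> (nat \<Rightarrow> nat list) \<Rightarrow> nat \<Rightarrow> ps_state" where
  "ps_run n m P k = (ps_step n m P ^^ k) (ps_init m)"

text \<open>Final allocation: after m phases every item is exhausted (each phase exhausts one).\<close>
definition ps_alloc :: "nat \<Rightarrow> nat \<Rightarrow> (nat \<Rightarrow> nat list) \<Rightarrow> nat \<Rightarrow> nat \<Rightarrow> real" where
  "ps_alloc n m P = snd (snd (ps_run n m P m))"

definition exhaust_time :: "nat \<Rightarrow> nat \<Rightarrow> (nat \<Rightarrow> nat list) \<Rightarrow> nat \<Rightarrow> real" where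
  "exhaust_time n m P j = fst (ps_run n m P (LEAST k. fst (snd (ps_run n m P k)) j \<le> 0))"

definition utility :: "nat set \<Rightarrow> (nat \<Rightarrow> real) \<Rightarrow> real" where
  "utility Ob a = (\<Sum>j\<in>Ob. a j)"

end

theory Submission
  imports Defs
begin

text \<open>Whatever the manipulating agent reports, it never receives more than one unit in total:
  the n agents together eat at rate n and the supply is m \<le> n, so the process is over by time 1,
  and each agent's total consumption equals the elapsed time. When it reports truthfully, it eats
  only items of \<open>O\<close> as long as one of them is left, so its utility is at least the exhaustion
  time of every item of \<open>O\<close>, hence at least T \<ge> 2/3. Thus its manipulated utility is at most
  1 = 3/2 \<cdot> 2/3, which is at most 3/2 times its truthful utility.\<close>

definition phase_length :: "nat \<Rightarrow> nat \<Rightarrow> (nat \<Rightarrow> nat list) \<Rightarrow> (nat \<Rightarrow> real) \<Rightarrow> real" where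
  "phase_length n m Q s =
     Min ((\<lambda>j. s j / real (eaters n Q (avail m s) j)) ` {j \<in> avail m s. 0 < eaters n Q (avail m s) j})"

lemma avail_subset: "avail m s \<subseteq> {..<m}"
  by (auto simp: avail_def)

lemma finite_avail [simp]: "finite (avail m s)"
  using finite_subset[OF avail_subset] by blast

lemma top_item_mem: "A \<inter> set xs \<noteq> {} \<Longrightarrow> top_item xs A \<in> A \<inter> set xs"
proof -
  assume "A \<inter> set xs \<noteq> {}"
  then have "filter (\<lambda>j. j \<in> A) xs \<noteq> []"
    by (auto simp: filter_empty_conv)
  then have "top_item xs A \<in> set (filter (\<lambda>j. j \<in> A) xs)"
    unfolding top_item_def by (rule hd_in_set)
  then show ?thesis by auto
qed

lemma top_item_append: "A \<inter> set xs \<noteq> {} \<Longrightarrow> top_item (xs @ ys) A = top_item xs A"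
proof -
  assume "A \<inter> set xs \<noteq> {}"
  then have "filter (\<lambda>j. j \<in> A) xs \<noteq> []"
    by (auto simp: filter_empty_conv)
  then show ?thesis by (simp add: top_item_def)
qed

lemma top_item_take: "A \<inter> set (take k xs) \<noteq> {} \<Longrightarrow> top_item xs A \<in> set (take k xs)"
  using top_item_mem top_item_append[of A "take k xs" "drop k xs"] by force

lemma eaters_top_item_pos: "i < n \<Longrightarrow> 0 < eaters n Q A (top_item (Q i) A)"
  unfolding eaters_def by (subst card_gt_0_iff) auto

lemma sum_eaters:
  assumes "finite A" and "\<forall>i<n. top_item (Q i) A \<in> A"
  shows "(\<Sum>j\<in>A. real (eaters n Q A j)) = real n"
proof -
  have "(\<Sum>j\<in>A. eaters n Q A j) = (\<Sum>j\<in>A. \<Sum>i\<in>{i. i \<in> {..<n} \<and> top_item (Q i) A = j}. 1)"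
    by (simp add: eaters_def)
  also have "\<dots> = (\<Sum>i<n. 1)"
    using assms by (intro sum.group) auto
  finally show ?thesis
    by (simp flip: of_nat_sum)
qed

lemma phase_length_le:
  "j \<in> avail m s \<Longrightarrow> 0 < eaters n Q (avail m s) j
     \<Longrightarrow> phase_length n m Q s \<le> s j / real (eaters n Q (avail m s) j)"
  unfolding phase_length_def by (intro Min_le) auto

locale ps_profile =
  fixes n m :: nat and Q :: "nat \<Rightarrow> nat list"
  assumes orders: "\<forall>i<n. is_order m (Q i)" and agents_pos: "0 < n"
begin

abbreviation run_time :: "nat \<Rightarrow> real" where
  "run_time r \<equiv> fst (ps_run n m Q r)"

abbreviation run_supply :: "nat \<Rightarrow> nat \<Rightarrow> real" where
  "run_supply r \<equiv> fst (snd (ps_run n m Q r))"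

abbreviation run_alloc :: "nat \<Rightarrow> nat \<Rightarrow> nat \<Rightarrow> real" where
  "run_alloc r \<equiv> snd (snd (ps_run n m Q r))"

abbreviation run_avail :: "nat \<Rightarrow> nat set" where
  "run_avail r \<equiv> avail m (run_supply r)"

lemma run_time_Suc:
  "run_time (Suc r) = run_time r + (if run_avail r = {} then 0 else phase_length n m Q (run_supply r))"
  by (cases "ps_run n m Q r") (simp add: ps_run_def ps_step_def phase_length_def Let_def)

lemma run_supply_Suc:
  "run_supply (Suc r) j = (if j \<in> run_avail r
     then run_supply r j - real (eaters n Q (run_avail r) j) * phase_length n m Q (run_supply r)
     else run_supply r j)"
  by (cases "ps_run n m Q r") (simp add: ps_run_def ps_step_def phase_length_def Let_def)

lemma run_alloc_Suc:
  "run_alloc (Suc r) i j = (if i < n \<and> run_avail r \<noteq> {} \<and> j = top_item (Q i) (run_avail r)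
     then run_alloc r i j + phase_length n m Q (run_supply r)
     else run_alloc r i j)"
  by (cases "ps_run n m Q r") (auto simp: ps_run_def ps_step_def phase_length_def Let_def)

lemma top_item_avail: "avail m s \<noteq> {} \<Longrightarrow> i < n \<Longrightarrow> top_item (Q i) (avail m s) \<in> avail m s"
  using top_item_mem[of "avail m s" "Q i"] orders avail_subset[of m s]
  by (auto simp: is_order_def atLeast0LessThan)

lemma phase_length_attained:
  assumes "avail m s \<noteq> {}"
  obtains j where "j \<in> avail m s" and "0 < eaters n Q (avail m s) j"
    and "phase_length n m Q s = s j / real (eaters n Q (avail m s) j)"
proof -
  let ?c = "eaters n Q (avail m s)"
  have "top_item (Q 0) (avail m s) \<in> {j \<in> avail m s. 0 < ?c j}"
    using top_item_avail[OF assms agents_pos] eaters_top_item_pos[OF agents_pos] by blast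
  then have "phase_length n m Q s \<in> (\<lambda>j. s j / real (?c j)) ` {j \<in> avail m s. 0 < ?c j}"
    unfolding phase_length_def by (intro Min_in) auto
  then show ?thesis using that by blast
qed

lemma phase_length_pos: "avail m s \<noteq> {} \<Longrightarrow> 0 < phase_length n m Q s"
  by (elim phase_length_attained) (simp add: avail_def)

lemma run_avail_Suc_psubset: "run_avail r \<noteq> {} \<Longrightarrow> run_avail (Suc r) \<subset> run_avail r"
proof -
  assume ne: "run_avail r \<noteq> {}"
  obtain j where j: "j \<in> run_avail r" "0 < eaters n Q (run_avail r) j"
    and \<delta>: "phase_length n m Q (run_supply r) = run_supply r j / real (eaters n Q (run_avail r) j)"
    using phase_length_attained[OF ne] by blast
  have "run_supply (Suc r) j = 0"
    using j by (simp add: run_supply_Suc \<delta>)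
  then have "j \<notin> run_avail (Suc r)"
    by (simp add: avail_def)
  moreover have "run_avail (Suc r) \<subseteq> run_avail r"
    by (auto simp: avail_def run_supply_Suc split: if_splits)
  ultimately show ?thesis using j(1) by blast
qed

lemma card_run_avail: "card (run_avail r) \<le> m - r"
proof (induction r)
  case 0
  show ?case using card_mono[OF _ avail_subset] by fastforce
next
  case (Suc r)
  show ?case
  proof (cases "run_avail r = {}")
    case True
    then have "run_supply (Suc r) = run_supply r"
      by (simp add: run_supply_Suc fun_eq_iff)
    then show ?thesis using True by simp
  next
    case False
    then have "card (run_avail (Suc r)) < card (run_avail r)"
      by (intro psubset_card_mono run_avail_Suc_psubset) auto
    then show ?thesis using Suc.IH by linarith
  qed
qed

lemma run_avail_m: "run_avail m = {}"
  using card_run_avail[of m] by simp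

lemma run_supply_nonneg: "0 \<le> run_supply r j"
proof (induction r)
  case 0
  show ?case by (simp add: ps_run_def ps_init_def)
next
  case (Suc r)
  let ?c = "eaters n Q (run_avail r) j"
  show ?case
  proof (cases "j \<in> run_avail r \<and> 0 < ?c")
    case True
    then have "phase_length n m Q (run_supply r) \<le> run_supply r j / real ?c"
      by (intro phase_length_le) auto
    then show ?thesis using True by (simp add: run_supply_Suc field_simps)
  next
    case False
    then show ?thesis using Suc.IH by (auto simp: run_supply_Suc)
  qed
qed

lemma run_supply_total: "real n * run_time r = (\<Sum>j<m. 1 - run_supply r j)"
proof (induction r)
  case 0
  show ?case by (simp add: ps_run_def ps_init_def)
next
  case (Suc r)
  let ?A = "run_avail r" and ?\<delta> = "phase_length n m Q (run_supply r)"
  have "(\<Sum>j<m. run_supply (Suc r) j)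
      = (\<Sum>j<m. run_supply r j) - (\<Sum>j<m. if j \<in> ?A then real (eaters n Q ?A j) * ?\<delta> else 0)"
    by (simp add: run_supply_Suc if_distrib sum_subtractf[symmetric] cong: if_cong)
  also have "(\<Sum>j<m. if j \<in> ?A then real (eaters n Q ?A j) * ?\<delta> else 0)
      = (\<Sum>j\<in>?A. real (eaters n Q ?A j)) * ?\<delta>"
    using avail_subset[of m "run_supply r"]
    by (simp add: sum.inter_restrict[symmetric] sum_distrib_right Int_absorb1)
  also have "\<dots> = (if ?A = {} then 0 else real n * ?\<delta>)"
    using sum_eaters[of ?A n Q] top_item_avail by auto
  finally show ?case
    using Suc.IH by (cases "?A = {}") (simp_all add: run_time_Suc sum_subtractf algebra_simps)
qed

lemma run_time_le_one: "m \<le> n \<Longrightarrow> run_time r \<le> 1"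
proof -
  assume "m \<le> n"
  have "real n * run_time r \<le> (\<Sum>j<m. 1)"
    unfolding run_supply_total using run_supply_nonneg by (intro sum_mono) auto
  also have "\<dots> \<le> real n * 1" using \<open>m \<le> n\<close> by simp
  finally show ?thesis using agents_pos by simp
qed

lemma run_alloc_mono: "r \<le> r' \<Longrightarrow> run_alloc r i j \<le> run_alloc r' i j"
proof (rule lift_Suc_mono_le[of "\<lambda>r. run_alloc r i j"])
  show "run_alloc q i j \<le> run_alloc (Suc q) i j" for q
    using phase_length_pos[of "run_supply q"] by (cases "run_avail q = {}") (auto simp: run_alloc_Suc)
qed

lemma run_alloc_nonneg: "0 \<le> run_alloc r i j"
  using run_alloc_mono[of 0 r i j] by (simp add: ps_run_def ps_init_def)

lemma run_alloc_sum_eq_run_time: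
  assumes "finite B" and "i < n"
    and "\<forall>r'<r. run_avail r' \<noteq> {} \<longrightarrow> top_item (Q i) (run_avail r') \<in> B"
  shows "(\<Sum>j\<in>B. run_alloc r i j) = run_time r"
  using assms(3)
proof (induction r)
  case 0
  show ?case by (simp add: ps_run_def ps_init_def)
next
  case (Suc r)
  let ?A = "run_avail r" and ?\<delta> = "phase_length n m Q (run_supply r)"
  have "run_alloc (Suc r) i j
      = run_alloc r i j + (if ?A \<noteq> {} \<and> j = top_item (Q i) ?A then ?\<delta> else 0)" for j
    using \<open>i < n\<close> by (simp add: run_alloc_Suc)
  then have "(\<Sum>j\<in>B. run_alloc (Suc r) i j)
      = (\<Sum>j\<in>B. run_alloc r i j) + (if ?A = {} then 0 else ?\<delta>)"
    using Suc.prems \<open>finite B\<close> by (simp add: sum.distrib)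
  then show ?case using Suc by (simp add: run_time_Suc)
qed

lemma utility_ps_alloc_le_one:
  assumes "m \<le> n" and "i < n" and "B \<subseteq> {..<m}"
  shows "utility B (ps_alloc n m Q i) \<le> 1"
proof -
  have "utility B (ps_alloc n m Q i) \<le> (\<Sum>j<m. run_alloc m i j)"
    unfolding utility_def ps_alloc_def using assms(3) run_alloc_nonneg by (intro sum_mono2) auto
  also have "\<dots> = run_time m"
    using assms(2) top_item_avail avail_subset by (intro run_alloc_sum_eq_run_time) blast+
  also have "\<dots> \<le> 1"
    using assms(1) by (rule run_time_le_one)
  finally show ?thesis .
qed

lemma exhaust_time_le_utility:
  assumes "i < n" and "j \<in> set (take k (Q i))"
  shows "exhaust_time n m Q j \<le> utility (set (take k (Q i))) (ps_alloc n m Q i)"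
proof -
  let ?O = "set (take k (Q i))"
  let ?R = "LEAST r. run_supply r j \<le> 0"
  have "j < m"
    using assms orders by (auto simp: is_order_def dest: in_set_takeD)
  then have "run_supply m j \<le> 0"
    using run_avail_m by (auto simp: avail_def)
  then have "?R \<le> m"
    by (rule Least_le)
  have "j \<in> run_avail r" if "r < ?R" for r
    using not_less_Least[OF that] \<open>j < m\<close> by (simp add: avail_def)
  then have "\<forall>r<?R. run_avail r \<noteq> {} \<longrightarrow> top_item (Q i) (run_avail r) \<in> ?O"
    using assms(2) by (blast intro: top_item_take)
  then have "exhaust_time n m Q j = (\<Sum>x\<in>?O. run_alloc ?R i x)"
    unfolding exhaust_time_def using assms(1) by (intro run_alloc_sum_eq_run_time[symmetric]) auto
  also have "\<dots> \<le> (\<Sum>x\<in>?O. run_alloc m i x)"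
    using \<open>?R \<le> m\<close> by (intro sum_mono run_alloc_mono)
  finally show ?thesis
    by (simp add: utility_def ps_alloc_def)
qed

end

theorem theorem3:
  fixes n m k :: nat and P :: "nat \<Rightarrow> nat list" and L' :: "nat list"
  assumes "m \<le> n" and "1 \<le> k" and "k \<le> m"
    and "\<forall>i<n. is_order m (P i)"
    and "is_order m L'"
    and "2/3 \<le> Max ((exhaust_time n m P) ` set (take k (P 0)))"
    and "Max ((exhaust_time n m P) ` set (take k (P 0))) \<le> 1"
  shows "utility (set (take k (P 0))) (ps_alloc n m (P(0 := L')) 0)
           \<le> 3/2 * utility (set (take k (P 0))) (ps_alloc n m P 0)"
proof -
  let ?O = "set (take k (P 0))"
  have "0 < n" using assms(1-3) by linarith
  interpret truthful: ps_profile n m P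
    using assms(4) \<open>0 < n\<close> by unfold_locales
  interpret manipulated: ps_profile n m "P(0 := L')"
    using assms(4,5) \<open>0 < n\<close> by unfold_locales simp
  have "set (P 0) = {0..<m}"
    using assms(4) \<open>0 < n\<close> by (simp add: is_order_def)
  then have "?O \<subseteq> {..<m}" and "?O \<noteq> {}"
    using assms(2,3) set_take_subset[of k "P 0"] by (auto simp: Suc_le_eq take_eq_Nil)
  have "utility ?O (ps_alloc n m (P(0 := L')) 0) \<le> 1"
    using assms(1) \<open>0 < n\<close> \<open>?O \<subseteq> {..<m}\<close> by (rule manipulated.utility_ps_alloc_le_one)
  moreover have "Max (exhaust_time n m P ` ?O) \<le> utility ?O (ps_alloc n m P 0)"
    using \<open>?O \<noteq> {}\<close> \<open>0 < n\<close> by (intro Max.boundedI) (auto intro: truthful.exhaust_time_le_utility)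
  ultimately show ?thesis
    using assms(6) by linarith
qed

end
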